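(* Let $\mathtt{X}$ and $\mathtt{Y}$ be two operations in a run $r$ of a protocol $P$. If $\mathtt{Y}$ completes in $r$ and $\mathtt{X}\not\boldsymbol{\rightsquigarrow}_r\mathtt{Y}$, then there exists a run $r'\approx r$ in which both (i) $\mathtt{Y}<_{r'}\mathtt{X}$, and (ii) $\mathtt{X}<_{r'}\mathtt{Z}$ for every operation $\mathtt{Z}$ that completes in $r$ such that $\mathtt{X}<_r\mathtt{Z}$ and $\mathtt{Z}\not\boldsymbol{\rightsquigarrow}_r\mathtt{Y}$ (here operations of $r'$ are identified with their corresponding operations of $r$).
   Context: Model: $n$ processes connected by directed FIFO channels; an environment (adversary) schedules everything. Time is identified with the natural numbers; a run $r=r(0),r(1),\dots$ is an infinite sequence of global states, $r_i(m)$ denotes process $i$'s local state at time $m$, and round $m+1$ transforms $r(m)$ into $r(m+1)$. In each round the environment chooses independently for each process $i$ one of: $\mathtt{move}_i$ ($i$ performs an action allowed by its protocol at its current local state — a local action, a message send, or a response action), $\mathtt{skip}_i$, $\mathtt{invoke}_i(x)$ ($i$ receives external input $x$), or $\mathtt{deliver}_i$ of a message from some $j$ (delivered if it is the oldest message in transit on the channel from $j$ to $i$). The local state of a process consists of its initial value and the complete ordered history of its actions, messages sent and received, and inputs. A run of protocol $P$ starts in an initial global state and every process action is allowed by $P$ at the current local state. A node is a process-time pair $\langle p,t\rangle$. Message chains: $\langle p,t\rangle\rightsquigarrow_r\langle q,t'\rangle$ holds if (1a) $p=q$ and $t<t'$, or (1b) $p$ sends a message to $q$ in round $t+1$ of $r$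 delivered no later than round $t'$, or (2) transitively via some intermediate node. Runs are locally equivalent, $r\approx r'$, if every process passes through exactly the same set of local states in both. Operations: an operation $\mathtt{X}$ of process $i$ starts with an invocation input $\mathtt{invoke}_i(\cdot)$ in round $t$ and ends with a matching response action performed by $i$ in round $t'$; write $\mathtt{X}.s=\langle i,t\rangle$, $\mathtt{X}.e=\langle i,t'\rangle$, $t_{\mathtt{X}.s}(r)=t$, $t_{\mathtt{X}.e}(r)=t'$. $\mathtt{X}$ completes in $r$ if both invocation and response occur. $\mathtt{X}<_r\mathtt{Y}$ means $t_{\mathtt{X}.e}(r)<t_{\mathtt{Y}.s}(r)$. $\mathtt{X}\boldsymbol{\rightsquigarrow}_r\mathtt{Y}$ means $\mathtt{X}.s\rightsquigarrow_r\mathtt{Y}.e$. An operation $\mathtt{X}$ of $i$ in $r$ corresponds to an operation $\mathtt{X}'$ of $i$ in $r'$ if $r_i(t_{\mathtt{X}.s}(r))=r'_i(t_{\mathtt{X}'.s}(r'))$ and $r_i(t_{\mathtt{X}.e}(r))=r'_i(t_{\mathtt{X}'.e}(r'))$. *)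

theory Defs
  imports Main
begin

datatype ('p, 'm, 'a, 'o) action =
    LocalAct 'a
  | SendAct 'p 'm
  | RespAct 'o

datatype ('p, 'm, 'a, 'o, 'x) event =
    Did "('p, 'm, 'a, 'o) action"
  | Recv 'p 'm                      (* delivery of a message from the given process *)
  | Inp 'x                          (* external input (invocation) *)

type_synonym ('v, 'p, 'm, 'a, 'o, 'x) lstate = "'v \<times> ('p, 'm, 'a, 'o, 'x) event list"

text \<open>Global state: local states of all processes (channel contents are determined
 by the histories: sent but not yet received messages, in FIFO order).\<close>
type_synonym ('v, 'p, 'm, 'a, 'o, 'x) gstate = "'p \<Rightarrow> ('v, 'p, 'm, 'a, 'o, 'x) lstate"

type_synonym ('v, 'p, 'm, 'a, 'o, 'x) run = "nat \<Rightarrow> ('v, 'p, 'm, 'a, 'o, 'x) gstate"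

type_synonym ('v, 'p, 'm, 'a, 'o, 'x) protocol =
  "'p \<Rightarrow> ('v, 'p, 'm, 'a, 'o, 'x) lstate \<Rightarrow> ('p, 'm, 'a, 'o) action set"

definition hist :: "('v, 'p, 'm, 'a, 'o, 'x) lstate \<Rightarrow> ('p, 'm, 'a, 'o, 'x) event list" where
  "hist s = snd s"

definition ext :: "('v, 'p, 'm, 'a, 'o, 'x) lstate \<Rightarrow> ('p, 'm, 'a, 'o, 'x) event \<Rightarrow> ('v, 'p, 'm, 'a, 'o, 'x) lstate" where
  "ext s e = (fst s, snd s @ [e])"

fun sent_to :: "'p \<Rightarrow> ('p, 'm, 'a, 'o, 'x) event list \<Rightarrow> 'm list" where
  "sent_to q [] = []"
| "sent_to q (Did (SendAct q' m) # es) = (if q' = q then m # sent_to q es else sent_to q es)"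
| "sent_to q (_ # es) = sent_to q es"

fun recvd_from :: "'p \<Rightarrow> ('p, 'm, 'a, 'o, 'x) event list \<Rightarrow> 'm list" where
  "recvd_from p [] = []"
| "recvd_from p (Recv p' m # es) = (if p' = p then m # recvd_from p es else recvd_from p es)"
| "recvd_from p (_ # es) = recvd_from p es"

text \<open>One process's transition in a round, as chosen by the environment:
 skip, move (an allowed action), invoke(x), or delivery of the oldest message in
 transit on the channel from some j.\<close>
definition proc_step ::
  "('v, 'p, 'm, 'a, 'o, 'x) protocol \<Rightarrow> ('v, 'p, 'm, 'a, 'o, 'x) gstate \<Rightarrow> 'p
   \<Rightarrow> ('v, 'p, 'm, 'a, 'o, 'x) lstate \<Rightarrow> bool" where
  "proc_step P g i s' \<longleftrightarrow>
     s' = g i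
   \<or> (\<exists>a \<in> P i (g i). s' = ext (g i) (Did a))
   \<or> (\<exists>x. s' = ext (g i) (Inp x))
   \<or> (\<exists>j. length (recvd_from j (hist (g i))) < length (sent_to i (hist (g j)))
          \<and> s' = ext (g i) (Recv j (sent_to i (hist (g j)) ! length (recvd_from j (hist (g i))))))"

definition round_step ::
  "('v, 'p, 'm, 'a, 'o, 'x) protocol \<Rightarrow> ('v, 'p, 'm, 'a, 'o, 'x) gstate
   \<Rightarrow> ('v, 'p, 'm, 'a, 'o, 'x) gstate \<Rightarrow> bool" where
  "round_step P g g' \<longleftrightarrow> (\<forall>i. proc_step P g i (g' i))"

definition initial :: "('v, 'p, 'm, 'a, 'o, 'x) gstate \<Rightarrow> bool" where
  "initial g \<longleftrightarrow> (\<forall>i. hist (g i) = [])"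

definition is_run :: "('v, 'p, 'm, 'a, 'o, 'x) protocol \<Rightarrow> ('v, 'p, 'm, 'a, 'o, 'x) run \<Rightarrow> bool" where
  "is_run P r \<longleftrightarrow> initial (r 0) \<and> (\<forall>m. round_step P (r m) (r (Suc m)))"

definition loc_equiv :: "('v, 'p, 'm, 'a, 'o, 'x) run \<Rightarrow> ('v, 'p, 'm, 'a, 'o, 'x) run \<Rightarrow> bool" where
  "loc_equiv r r' \<longleftrightarrow> (\<forall>i. range (\<lambda>m. r m i) = range (\<lambda>m. r' m i))"

text \<open>By FIFO the message sent in round t+1 is the k-th message from p to q,
 where k is the number of messages p sent to q up to time t.\<close>
definition sends_delivered :: "('v, 'p, 'm, 'a, 'o, 'x) run \<Rightarrow> 'p \<Rightarrow> nat \<Rightarrow> 'p \<Rightarrow> nat \<Rightarrow> bool" where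
  "sends_delivered r p t q t' \<longleftrightarrow>
     (\<exists>m. r (Suc t) p = ext (r t p) (Did (SendAct q m)))
   \<and> length (sent_to q (hist (r t p))) < length (recvd_from p (hist (r t' q)))"

inductive msg_chain :: "('v, 'p, 'm, 'a, 'o, 'x) run \<Rightarrow> 'p \<times> nat \<Rightarrow> 'p \<times> nat \<Rightarrow> bool"
  for r where
  local: "t < t' \<Longrightarrow> msg_chain r (p, t) (p, t')"
| msg: "sends_delivered r p t q t' \<Longrightarrow> msg_chain r (p, t) (q, t')"
| trans: "msg_chain r a b \<Longrightarrow> msg_chain r b c \<Longrightarrow> msg_chain r a c"

text \<open>Process i receives an input in round t (t = m+1, transforming r(m) into r(m+1)).\<close>
definition invoked_in :: "('v, 'p, 'm, 'a, 'o, 'x) run \<Rightarrow> 'p \<Rightarrow> nat \<Rightarrow> bool" where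
  "invoked_in r i t \<longleftrightarrow> (\<exists>m x. t = Suc m \<and> r (Suc m) i = ext (r m i) (Inp x))"

definition responds_in :: "('v, 'p, 'm, 'a, 'o, 'x) run \<Rightarrow> 'p \<Rightarrow> nat \<Rightarrow> bool" where
  "responds_in r i t \<longleftrightarrow> (\<exists>m v. t = Suc m \<and> r (Suc m) i = ext (r m i) (Did (RespAct v)))"

text \<open>An operation is identified by its process and its invocation round;
 its matching response is the first response action of that process after the invocation.\<close>
type_synonym 'p op = "'p \<times> nat"

definition is_op :: "('v, 'p, 'm, 'a, 'o, 'x) run \<Rightarrow> 'p op \<Rightarrow> bool" where
  "is_op r X \<longleftrightarrow> invoked_in r (fst X) (snd X)"

definition op_start :: "'p op \<Rightarrow> nat" where
  "op_start X = snd X"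

definition op_completes :: "('v, 'p, 'm, 'a, 'o, 'x) run \<Rightarrow> 'p op \<Rightarrow> bool" where
  "op_completes r X \<longleftrightarrow> is_op r X \<and> (\<exists>t. snd X < t \<and> responds_in r (fst X) t)"

definition op_end :: "('v, 'p, 'm, 'a, 'o, 'x) run \<Rightarrow> 'p op \<Rightarrow> nat" where
  "op_end r X = (LEAST t. snd X < t \<and> responds_in r (fst X) t)"

definition op_before :: "('v, 'p, 'm, 'a, 'o, 'x) run \<Rightarrow> 'p op \<Rightarrow> 'p op \<Rightarrow> bool" where
  "op_before r X Y \<longleftrightarrow> op_completes r X \<and> is_op r Y \<and> op_end r X < op_start Y"

definition op_chain :: "('v, 'p, 'm, 'a, 'o, 'x) run \<Rightarrow> 'p op \<Rightarrow> 'p op \<Rightarrow> bool" where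
  "op_chain r X Y \<longleftrightarrow> msg_chain r (fst X, op_start X) (fst Y, op_end r Y)"

definition op_corresponds ::
  "('v, 'p, 'm, 'a, 'o, 'x) run \<Rightarrow> 'p op \<Rightarrow> ('v, 'p, 'm, 'a, 'o, 'x) run \<Rightarrow> 'p op \<Rightarrow> bool" where
  "op_corresponds r X r' X' \<longleftrightarrow>
     fst X = fst X' \<and> is_op r X \<and> is_op r' X'
   \<and> r (op_start X) (fst X) = r' (op_start X') (fst X')
   \<and> (op_completes r X \<longleftrightarrow> op_completes r' X')
   \<and> (op_completes r X \<longrightarrow> r (op_end r X) (fst X) = r' (op_end r' X') (fst X'))"

end

theory Submission
  imports Defs "HOL-Library.Sublist"
begin

text \<open>Let T be the round in which Y responds, and let the causal cut c of the node \<langle>y, T\<rangle>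
  consist of the nodes \<langle>i, t\<rangle> with \<langle>i, t\<rangle> \<leadsto> \<langle>y, T\<rangle>; these are exactly the t < c i. The cut is
  consistent: every message received inside it was sent inside it. Hence r can be rescheduled
  so that during the first T rounds each process executes only its rounds inside the cut, and
  afterwards executes its remaining rounds, each shifted by T. The result r' is a run of the same
  protocol in which every process passes through the same local states, and Y still ends at
  time T. Since X and every operation Z with Z \<not>\<leadsto> Y start outside the cut, in r' they start
  after T and keep their relative order.\<close>

lemma ext_eq_iff [simp]: "ext s e = ext s e' \<longleftrightarrow> e = e'"
  by (simp add: ext_def)

lemma ext_neq_self [simp]: "ext s e \<noteq> s" "s \<noteq> ext s e"
  by (simp_all add: ext_def prod_eq_iff)

lemma hist_ext [simp]: "hist (ext s e) = hist s @ [e]"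
  by (simp add: ext_def hist_def)

lemma sent_to_append [simp]: "sent_to q (xs @ ys) = sent_to q xs @ sent_to q ys"
  by (induction q xs rule: sent_to.induct) auto

lemma recvd_from_append [simp]: "recvd_from p (xs @ ys) = recvd_from p xs @ recvd_from p ys"
  by (induction p xs rule: recvd_from.induct) auto

lemma length_sent_to_single: "length (sent_to q [e]) \<le> 1"
proof (cases e)
  case (Did a)
  then show ?thesis by (cases a) simp_all
qed simp_all

lemma sent_to_single_neq_Nil:
  assumes "sent_to q [e] \<noteq> []"
  shows "\<exists>m. e = Did (SendAct q m)"
proof (cases e)
  case (Did a)
  with assms show ?thesis by (cases a) (simp_all split: if_splits)
qed (use assms in simp_all)

lemma length_recvd_from_single: "length (recvd_from p [e]) \<le> 1"
  by (cases e) simp_all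

lemma recvd_from_single_neq_Nil:
  assumes "recvd_from p [e] \<noteq> []"
  shows "\<exists>m. e = Recv p m"
  using assms by (cases e) (simp_all split: if_splits)

lemma run_step_cases [consumes 1]:
  assumes "is_run P r"
  obtains (stutter) "r (Suc m) i = r m i"
  | (act) a where "a \<in> P i (r m i)" "r (Suc m) i = ext (r m i) (Did a)"
  | (input) x where "r (Suc m) i = ext (r m i) (Inp x)"
  | (deliver) j where "length (recvd_from j (hist (r m i))) < length (sent_to i (hist (r m j)))"
      "r (Suc m) i = ext (r m i) (Recv j (sent_to i (hist (r m j)) ! length (recvd_from j (hist (r m i)))))"
  using assms unfolding is_run_def round_step_def proc_step_def by blast

lemma run_hist_Nil: "is_run P r \<Longrightarrow> hist (r 0 i) = []"
  by (simp add: is_run_def initial_def)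

lemma run_local_step:
  assumes "is_run P r"
  shows "r (Suc m) i = r m i \<or> (\<exists>e. r (Suc m) i = ext (r m i) e)"
  using assms by (cases rule: run_step_cases[where m = m and i = i]) auto

lemma run_hist_prefix:
  assumes "is_run P r" "m \<le> n"
  shows "prefix (hist (r m i)) (hist (r n i))"
  using assms(2)
proof (induction n rule: dec_induct)
  case (step n)
  then show ?case
    using run_local_step[OF assms(1), of n i] by (auto intro: prefix_order.trans)
qed simp

lemma prefix_sent_to: "prefix xs ys \<Longrightarrow> prefix (sent_to q xs) (sent_to q ys)"
  by (auto simp: prefix_def)

lemma prefix_recvd_from: "prefix xs ys \<Longrightarrow> prefix (recvd_from p xs) (recvd_from p ys)"
  by (auto simp: prefix_def)

lemma run_sent_to_prefix:
  "is_run P r \<Longrightarrow> m \<le> n \<Longrightarrow> prefix (sent_to q (hist (r m p))) (sent_to q (hist (r n p)))"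
  by (rule prefix_sent_to[OF run_hist_prefix])

lemma run_recvd_from_prefix:
  "is_run P r \<Longrightarrow> m \<le> n \<Longrightarrow> prefix (recvd_from p (hist (r m q))) (recvd_from p (hist (r n q)))"
  by (rule prefix_recvd_from[OF run_hist_prefix])

lemma run_length_sent_to_mono:
  "is_run P r \<Longrightarrow> m \<le> n \<Longrightarrow> length (sent_to q (hist (r m p))) \<le> length (sent_to q (hist (r n p)))"
  by (rule prefix_length_le[OF run_sent_to_prefix])

lemma run_length_recvd_from_mono:
  "is_run P r \<Longrightarrow> m \<le> n \<Longrightarrow> length (recvd_from p (hist (r m q))) \<le> length (recvd_from p (hist (r n q)))"
  by (rule prefix_length_le[OF run_recvd_from_prefix])

lemma prefix_nth: "prefix xs ys \<Longrightarrow> n < length xs \<Longrightarrow> xs ! n = ys ! n"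
  by (auto simp: prefix_def nth_append)

lemma run_sent_to_nth:
  assumes "is_run P r"
    and "n < length (sent_to q (hist (r m p)))" "n < length (sent_to q (hist (r m' p)))"
  shows "sent_to q (hist (r m p)) ! n = sent_to q (hist (r m' p)) ! n"
proof (cases "m \<le> m'")
  case True
  then show ?thesis using prefix_nth[OF run_sent_to_prefix[OF assms(1)] assms(2)] by simp
next
  case False
  then have "m' \<le> m" by simp
  then show ?thesis using prefix_nth[OF run_sent_to_prefix[OF assms(1)] assms(3)] by simp
qed

lemma run_recvd_prefix_sent_step:
  assumes "is_run P r" and IH: "prefix (recvd_from p (hist (r m q))) (sent_to q (hist (r m p)))"
  shows "prefix (recvd_from p (hist (r (Suc m) q))) (sent_to q (hist (r m p)))"
  using assms(1)
proof (cases rule: run_step_cases[where m = m and i = q])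
  case (deliver j)
  show ?thesis
  proof (cases "j = p")
    case True
    with deliver show ?thesis using append_one_prefix[OF IH] by simp
  next
    case False
    with deliver show ?thesis using IH by simp
  qed
next
  case stutter
  then show ?thesis using IH by simp
next
  case (act a)
  then show ?thesis using IH by simp
next
  case (input x)
  then show ?thesis using IH by simp
qed

lemma run_recvd_prefix_sent:
  assumes "is_run P r"
  shows "prefix (recvd_from p (hist (r m q))) (sent_to q (hist (r m p)))"
proof (induction m)
  case 0
  then show ?case using run_hist_Nil[OF assms] by simp
next
  case (Suc m)
  have "prefix (recvd_from p (hist (r (Suc m) q))) (sent_to q (hist (r m p)))"
    by (rule run_recvd_prefix_sent_step[OF assms Suc.IH])
  moreover have "prefix (sent_to q (hist (r m p))) (sent_to q (hist (r (Suc m) p)))"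
    by (rule run_sent_to_prefix[OF assms]) simp
  ultimately show ?case by (rule prefix_order.trans)
qed

lemma run_recvd_prefix_sent_before:
  "is_run P r \<Longrightarrow> prefix (recvd_from p (hist (r (Suc m) q))) (sent_to q (hist (r m p)))"
  by (rule run_recvd_prefix_sent_step[OF _ run_recvd_prefix_sent])

lemma run_nth_event_round:
  fixes F :: "('p, 'm, 'a, 'o, 'x) event list \<Rightarrow> 'b list"
  assumes run: "is_run P r"
    and F_append: "\<And>xs ys. F (xs @ ys) = F xs @ F ys"
    and F_single: "\<And>e. length (F [e]) \<le> 1"
    and "L < length (F (hist (r k p)))"
  shows "\<exists>s<k. length (F (hist (r s p))) = L \<and> (\<exists>e. r (Suc s) p = ext (r s p) e \<and> F [e] \<noteq> [])"
  using assms(4)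
proof (induction k)
  case 0
  have "length (F []) = length (F []) + length (F [])"
    using arg_cong[OF F_append[of "[]" "[]"], of length] by simp
  then show ?case using 0 run_hist_Nil[OF run] by simp
next
  case (Suc k)
  show ?case
  proof (cases "L < length (F (hist (r k p)))")
    case True
    then show ?thesis using Suc.IH less_SucI by blast
  next
    case False
    obtain e where e: "r (Suc k) p = ext (r k p) e"
      using run_local_step[OF run, of k p] False Suc.prems by auto
    then have "length (F (hist (r (Suc k) p))) = length (F (hist (r k p))) + length (F [e])"
      by (simp add: F_append)
    then have "L = length (F (hist (r k p)))" "F [e] \<noteq> []"
      using False Suc.prems F_single[of e] by auto
    then show ?thesis using e by blast
  qed
qed

lemma run_send_round:
  assumes "is_run P r" "L < length (sent_to q (hist (r k p)))"
  obtains s m where "s < k" "length (sent_to q (hist (r s p))) = L"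
    "r (Suc s) p = ext (r s p) (Did (SendAct q m))"
proof -
  obtain s e where "s < k" "length (sent_to q (hist (r s p))) = L"
    and e: "r (Suc s) p = ext (r s p) e" "sent_to q [e] \<noteq> []"
    using run_nth_event_round[OF assms(1) sent_to_append length_sent_to_single assms(2)] by blast
  moreover obtain m where "e = Did (SendAct q m)"
    using sent_to_single_neq_Nil[OF e(2)] by blast
  ultimately show thesis using that by simp
qed

lemma run_receive_round:
  assumes "is_run P r" "L < length (recvd_from p (hist (r k q)))"
  obtains s m where "s < k" "length (recvd_from p (hist (r s q))) = L"
    "r (Suc s) q = ext (r s q) (Recv p m)"
proof -
  obtain s e where "s < k" "length (recvd_from p (hist (r s q))) = L"
    and e: "r (Suc s) q = ext (r s q) e" "recvd_from p [e] \<noteq> []"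
    using run_nth_event_round[OF assms(1) recvd_from_append length_recvd_from_single assms(2)] by blast
  moreover obtain m where "e = Recv p m"
    using recvd_from_single_neq_Nil[OF e(2)] by blast
  ultimately show thesis using that by simp
qed

section \<open>Message chains and the causal cut\<close>

lemma sends_delivered_time_less:
  assumes run: "is_run P r" and "sends_delivered r p t q t'"
  shows "t < t'"
proof (rule ccontr)
  assume "\<not> t < t'"
  then have "length (recvd_from p (hist (r t' q))) \<le> length (sent_to q (hist (r t p)))"
    using prefix_length_le[OF run_recvd_prefix_sent[OF run]] run_length_sent_to_mono[OF run]
    by (meson le_trans not_less)
  with assms(2) show False by (simp add: sends_delivered_def)
qed

lemma msg_chain_time_less:
  assumes "is_run P r" "msg_chain r a b"
  shows "snd a < snd b"
  using assms(2) by (induction rule: msg_chain.induct) (auto dest: sends_delivered_time_less[OF assms(1)])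

lemma msg_chain_from_non_send_round:
  assumes "msg_chain r (i, k) b" and "\<nexists>q m. r (Suc k) i = ext (r k i) (Did (SendAct q m))"
  shows "b = (i, Suc k) \<or> msg_chain r (i, Suc k) b"
  using assms
proof (induction "(i, k)" b rule: msg_chain.induct)
  case (local t')
  then show ?case by (auto intro: msg_chain.local)
next
  case (msg q t')
  then show ?case by (auto simp: sends_delivered_def)
next
  case (trans b c)
  then have "b = (i, Suc k) \<or> msg_chain r (i, Suc k) b" by simp
  then show ?case using \<open>msg_chain r b c\<close> by (metis msg_chain.trans)
qed

definition consistent_cut :: "('v, 'p, 'm, 'a, 'o, 'x) run \<Rightarrow> ('p \<Rightarrow> nat) \<Rightarrow> bool" where
  "consistent_cut r c \<longleftrightarrow>
     (\<forall>i j. length (recvd_from j (hist (r (c i) i))) \<le> length (sent_to i (hist (r (c j) j))))"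

definition causal_cut :: "('v, 'p, 'm, 'a, 'o, 'x) run \<Rightarrow> 'p \<times> nat \<Rightarrow> 'p \<Rightarrow> nat" where
  "causal_cut r b i = (LEAST t. \<not> msg_chain r (i, t) b)"

lemma not_msg_chain_to_time:
  assumes "is_run P r"
  shows "\<not> msg_chain r (i, snd b) b"
  using msg_chain_time_less[OF assms] by fastforce

lemma causal_cut_le:
  assumes "is_run P r"
  shows "causal_cut r b i \<le> snd b"
  unfolding causal_cut_def using not_msg_chain_to_time[OF assms] by (rule Least_le)

lemma msg_chain_iff_less_causal_cut:
  assumes "is_run P r"
  shows "msg_chain r (i, t) b \<longleftrightarrow> t < causal_cut r b i"
proof
  have not_chain: "\<not> msg_chain r (i, causal_cut r b i) b"
    unfolding causal_cut_def using not_msg_chain_to_time[OF assms] by (rule LeastI)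
  assume chain: "msg_chain r (i, t) b"
  show "t < causal_cut r b i"
  proof (rule ccontr)
    assume "\<not> t < causal_cut r b i"
    then have "causal_cut r b i = t \<or> msg_chain r (i, causal_cut r b i) (i, t)"
      by (auto intro: msg_chain.local)
    then show False using chain not_chain by (metis msg_chain.trans)
  qed
next
  show "t < causal_cut r b i \<Longrightarrow> msg_chain r (i, t) b"
    unfolding causal_cut_def by (rule not_less_Least[THEN notnotD])
qed

lemma causal_cut_self:
  assumes "is_run P r"
  shows "causal_cut r b (fst b) = snd b"
proof (rule antisym)
  show "causal_cut r b (fst b) \<le> snd b" by (rule causal_cut_le[OF assms])
  have "t < causal_cut r b (fst b)" if "t < snd b" for t
    using that msg_chain.local[of t "snd b" r "fst b"] msg_chain_iff_less_causal_cut[OF assms] by simp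
  then show "snd b \<le> causal_cut r b (fst b)"
    by (metis less_irrefl not_le)
qed

text \<open>The receiving round reaches b and is not a send, so it can be skipped in the chain
  (msg_chain_from_non_send_round); hence the sending round reaches b as well.\<close>
lemma consistent_cut_causal_cut:
  assumes run: "is_run P r"
  shows "consistent_cut r (causal_cut r b)"
  unfolding consistent_cut_def
proof (intro allI, rule ccontr)
  fix i j
  let ?c = "causal_cut r b" and ?L = "length (sent_to i (hist (r (causal_cut r b j) j)))"
  assume "\<not> length (recvd_from j (hist (r (?c i) i))) \<le> ?L"
  then obtain k m where k: "k < ?c i" "length (recvd_from j (hist (r k i))) = ?L"
    and recv: "r (Suc k) i = ext (r k i) (Recv j m)"
    using run_receive_round[OF run] by (metis not_le)
  have "?L < length (recvd_from j (hist (r (Suc k) i)))"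
    using k(2) recv by simp
  also have "\<dots> \<le> length (sent_to i (hist (r k j)))"
    using prefix_length_le[OF run_recvd_prefix_sent_before[OF run]] .
  finally obtain s m' where s: "length (sent_to i (hist (r s j))) = ?L"
    and send: "r (Suc s) j = ext (r s j) (Did (SendAct i m'))"
    using run_send_round[OF run] by metis
  have "sends_delivered r j s i (Suc k)"
    unfolding sends_delivered_def using send s k(2) recv by simp
  then have "msg_chain r (j, s) (i, Suc k)" by (rule msg_chain.msg)
  moreover have "msg_chain r (i, k) b"
    using k(1) msg_chain_iff_less_causal_cut[OF run] by simp
  then have "b = (i, Suc k) \<or> msg_chain r (i, Suc k) b"
    by (rule msg_chain_from_non_send_round) (simp add: recv)
  ultimately have "msg_chain r (j, s) b" by (metis msg_chain.trans)
  then have "Suc s \<le> ?c j" using msg_chain_iff_less_causal_cut[OF run] by simp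
  then have "length (sent_to i (hist (r (Suc s) j))) \<le> ?L"
    by (rule run_length_sent_to_mono[OF run])
  then show False using s send by simp
qed

lemma causal_cut_less_invocation:
  assumes run: "is_run P r" and "invoked_in r i t" "\<not> msg_chain r (i, t) b"
    and "\<not> invoked_in r (fst b) (snd b)"
  shows "causal_cut r b i < t"
proof -
  obtain k x where t: "t = Suc k" and inp: "r (Suc k) i = ext (r k i) (Inp x)"
    using assms(2) by (auto simp: invoked_in_def)
  have "\<not> msg_chain r (i, k) b"
  proof
    assume "msg_chain r (i, k) b"
    then have "b = (i, Suc k) \<or> msg_chain r (i, Suc k) b"
      by (rule msg_chain_from_non_send_round) (simp add: inp)
    then show False using assms(2-4) t by auto
  qed
  then show ?thesis using msg_chain_iff_less_causal_cut[OF run] t by (simp add: not_less)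
qed

section \<open>Rescheduling a run along a consistent cut\<close>

lemma reschedule_is_run:
  fixes g :: "'p \<Rightarrow> nat \<Rightarrow> nat"
  assumes run: "is_run P r"
    and start: "\<And>i. g i 0 = 0"
    and step: "\<And>i m. g i (Suc m) = g i m \<or> g i (Suc m) = Suc (g i m)"
    and fifo: "\<And>i j m. length (recvd_from j (hist (r (g i (Suc m)) i)))
                        \<le> length (sent_to i (hist (r (g j m) j)))"
  shows "is_run P (\<lambda>m i. r (g i m) i)"
  unfolding is_run_def round_step_def
proof (intro conjI allI)
  show "initial (\<lambda>i. r (g i 0) i)"
    using run by (simp add: start is_run_def)
next
  fix m i
  show "proc_step P (\<lambda>i. r (g i m) i) i (r (g i (Suc m)) i)"
  proof (cases "g i (Suc m) = g i m")
    case True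
    then show ?thesis by (simp add: proc_step_def)
  next
    case False
    define k where "k = g i m"
    have g_Suc: "g i (Suc m) = Suc k"
      using step[of i m] False by (simp add: k_def)
    from run show ?thesis
    proof (cases rule: run_step_cases[where m = k and i = i])
      case stutter
      then show ?thesis by (simp add: proc_step_def g_Suc k_def)
    next
      case (act a)
      then have "\<exists>a \<in> P i (r k i). r (Suc k) i = ext (r k i) (Did a)" by blast
      then show ?thesis by (simp add: proc_step_def g_Suc k_def)
    next
      case (input x)
      then show ?thesis by (simp add: proc_step_def g_Suc k_def)
    next
      case (deliver j)
      let ?L = "length (recvd_from j (hist (r k i)))"
      have "Suc ?L \<le> length (sent_to i (hist (r (g j m) j)))"
        using fifo[where i = i and j = j and m = m] deliver(2) by (simp add: g_Suc)
      then have L_less: "?L < length (sent_to i (hist (r (g j m) j)))" by simp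
      have "sent_to i (hist (r k j)) ! ?L = sent_to i (hist (r (g j m) j)) ! ?L"
        by (rule run_sent_to_nth[OF run deliver(1) L_less])
      then have "?L < length (sent_to i (hist (r (g j m) j)))
        \<and> r (Suc k) i = ext (r k i) (Recv j (sent_to i (hist (r (g j m) j)) ! ?L))"
        using L_less deliver(2) by simp
      then show ?thesis unfolding proc_step_def g_Suc k_def by auto
    qed
  qed
qed

lemma reschedule_loc_equiv:
  assumes "\<And>i. surj (g i)"
  shows "loc_equiv (\<lambda>m i. r (g i m) i) r"
  unfolding loc_equiv_def
proof
  fix i
  have "range (\<lambda>m. r (g i m) i) = (\<lambda>t. r t i) ` range (g i)"
    by (simp add: image_image)
  then show "range (\<lambda>m. r (g i m) i) = range (\<lambda>m. r m i)"
    using assms by simp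
qed

text \<open>Local time of process i at global time m when, during the first T \<ge> c i rounds, every
  process i executes only its first c i rounds, and afterwards its local round t > c i is
  executed in global round T + t.\<close>

definition cut_local_time :: "nat \<Rightarrow> ('p \<Rightarrow> nat) \<Rightarrow> 'p \<Rightarrow> nat \<Rightarrow> nat" where
  "cut_local_time T c i m = (if m \<le> T then min m (c i) else max (c i) (m - T))"

definition cut_global_time :: "nat \<Rightarrow> ('p \<Rightarrow> nat) \<Rightarrow> 'p \<Rightarrow> nat \<Rightarrow> nat" where
  "cut_global_time T c i t = (if t \<le> c i then t else T + t)"

definition cut_run ::
  "nat \<Rightarrow> ('p \<Rightarrow> nat) \<Rightarrow> ('v, 'p, 'm, 'a, 'o, 'x) run \<Rightarrow> ('v, 'p, 'm, 'a, 'o, 'x) run" where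
  "cut_run T c r m i = r (cut_local_time T c i m) i"

lemma cut_local_time_0: "cut_local_time T c i 0 = 0"
  by (simp add: cut_local_time_def)

lemma cut_local_time_Suc:
  "c i \<le> T \<Longrightarrow>
   cut_local_time T c i (Suc m) = cut_local_time T c i m
   \<or> cut_local_time T c i (Suc m) = Suc (cut_local_time T c i m)"
  by (auto simp: cut_local_time_def)

lemma cut_local_time_lag:
  assumes "c i \<le> T" "c j \<le> T"
  shows "cut_local_time T c i (Suc m) \<le> Suc (cut_local_time T c j m)
    \<or> cut_local_time T c i (Suc m) \<le> c i \<and> c j \<le> cut_local_time T c j m"
  using assms by (auto simp: cut_local_time_def)

lemma cut_local_time_global_time: "c i \<le> T \<Longrightarrow> cut_local_time T c i (cut_global_time T c i t) = t"
  by (auto simp: cut_local_time_def cut_global_time_def)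

lemma strict_mono_cut_global_time: "strict_mono (cut_global_time T c i)"
  by (auto simp: strict_mono_def cut_global_time_def)

lemma cut_run_is_run:
  assumes run: "is_run P r" and cut: "consistent_cut r c" and le_T: "\<And>i. c i \<le> T"
  shows "is_run P (cut_run T c r)"
proof -
  have "length (recvd_from j (hist (r (cut_local_time T c i (Suc m)) i)))
        \<le> length (sent_to i (hist (r (cut_local_time T c j m) j)))" for i j m
    using cut_local_time_lag[where c = c and T = T and i = i and j = j and m = m, OF le_T le_T]
  proof
    assume "cut_local_time T c i (Suc m) \<le> Suc (cut_local_time T c j m)"
    then have "length (recvd_from j (hist (r (cut_local_time T c i (Suc m)) i)))
        \<le> length (recvd_from j (hist (r (Suc (cut_local_time T c j m)) i)))"
      by (rule run_length_recvd_from_mono[OF run])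
    also have "\<dots> \<le> length (sent_to i (hist (r (cut_local_time T c j m) j)))"
      by (rule prefix_length_le[OF run_recvd_prefix_sent_before[OF run]])
    finally show ?thesis .
  next
    assume "cut_local_time T c i (Suc m) \<le> c i \<and> c j \<le> cut_local_time T c j m"
    then have "length (recvd_from j (hist (r (cut_local_time T c i (Suc m)) i)))
        \<le> length (recvd_from j (hist (r (c i) i)))"
      and "length (sent_to i (hist (r (c j) j)))
        \<le> length (sent_to i (hist (r (cut_local_time T c j m) j)))"
      by (simp_all add: run_length_recvd_from_mono[OF run] run_length_sent_to_mono[OF run])
    then show ?thesis
      using cut unfolding consistent_cut_def by (meson le_trans)
  qed
  then show ?thesis
    unfolding cut_run_def
    by (intro reschedule_is_run[OF run] cut_local_time_0 cut_local_time_Suc le_T)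
qed

lemma cut_run_loc_equiv:
  assumes "\<And>i. c i \<le> T"
  shows "loc_equiv (cut_run T c r) r"
proof -
  have "surj (cut_local_time T c i)" for i
    using cut_local_time_global_time[where c = c and T = T and i = i, OF assms] by (metis surjI)
  then show ?thesis
    unfolding cut_run_def by (rule reschedule_loc_equiv)
qed

section \<open>Retimings preserve operations\<close>

definition occurs_in ::
  "('v, 'p, 'm, 'a, 'o, 'x) run \<Rightarrow> 'p \<Rightarrow> nat \<Rightarrow> ('p, 'm, 'a, 'o, 'x) event \<Rightarrow> bool" where
  "occurs_in r i t e \<longleftrightarrow> (\<exists>m. t = Suc m \<and> r (Suc m) i = ext (r m i) e)"

lemma invoked_in_iff_occurs_in: "invoked_in r i t \<longleftrightarrow> (\<exists>x. occurs_in r i t (Inp x))"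
  by (auto simp: invoked_in_def occurs_in_def)

lemma responds_in_iff_occurs_in: "responds_in r i t \<longleftrightarrow> (\<exists>v. occurs_in r i t (Did (RespAct v)))"
  by (auto simp: responds_in_def occurs_in_def)

lemma cut_local_time_pred_global_time:
  "c i \<le> T \<Longrightarrow> cut_global_time T c i (Suc k) = Suc m \<Longrightarrow> cut_local_time T c i m = k"
  by (auto simp: cut_local_time_def cut_global_time_def split: if_splits)

lemma cut_global_time_local_time_Suc:
  "c i \<le> T \<Longrightarrow> cut_local_time T c i (Suc m) = Suc (cut_local_time T c i m)
   \<Longrightarrow> cut_global_time T c i (cut_local_time T c i (Suc m)) = Suc m"
  by (auto simp: cut_local_time_def cut_global_time_def split: if_splits)

lemma occurs_in_cut_run:
  assumes le_T: "c i \<le> T"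
  shows "occurs_in (cut_run T c r) i t' e \<longleftrightarrow> (\<exists>t. t' = cut_global_time T c i t \<and> occurs_in r i t e)"
proof
  assume "occurs_in (cut_run T c r) i t' e"
  then obtain m where t': "t' = Suc m"
    and e: "r (cut_local_time T c i (Suc m)) i = ext (r (cut_local_time T c i m) i) e"
    by (auto simp: occurs_in_def cut_run_def)
  then have "cut_local_time T c i (Suc m) \<noteq> cut_local_time T c i m" by auto
  then have Suc: "cut_local_time T c i (Suc m) = Suc (cut_local_time T c i m)"
    using cut_local_time_Suc[where c = c and T = T and i = i, OF le_T] by blast
  show "\<exists>t. t' = cut_global_time T c i t \<and> occurs_in r i t e"
  proof (intro exI conjI)
    show "t' = cut_global_time T c i (cut_local_time T c i (Suc m))"
      using cut_global_time_local_time_Suc[where c = c and T = T and i = i, OF le_T Suc] t' by simp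
    show "occurs_in r i (cut_local_time T c i (Suc m)) e"
      using e Suc by (simp add: occurs_in_def)
  qed
next
  assume "\<exists>t. t' = cut_global_time T c i t \<and> occurs_in r i t e"
  then obtain k where t': "t' = cut_global_time T c i (Suc k)" and e: "r (Suc k) i = ext (r k i) e"
    by (auto simp: occurs_in_def)
  obtain m where m: "cut_global_time T c i (Suc k) = Suc m"
    by (cases "cut_global_time T c i (Suc k)") (auto simp: cut_global_time_def split: if_splits)
  have "cut_local_time T c i m = k"
    by (rule cut_local_time_pred_global_time[where c = c and T = T and i = i, OF le_T m])
  moreover have "cut_local_time T c i (Suc m) = Suc k"
    using cut_local_time_global_time[where c = c and T = T and i = i, OF le_T] m by metis
  ultimately show "occurs_in (cut_run T c r) i t' e"
    using e t' m by (simp add: occurs_in_def cut_run_def)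
qed

definition retiming ::
  "('v, 'p, 'm, 'a, 'o, 'x) run \<Rightarrow> ('v, 'p, 'm, 'a, 'o, 'x) run \<Rightarrow> ('p \<Rightarrow> nat \<Rightarrow> nat) \<Rightarrow> bool" where
  "retiming r r' f \<longleftrightarrow>
     (\<forall>i. strict_mono (f i) \<and> (\<forall>t. r' (f i t) i = r t i)
        \<and> (\<forall>t' e. occurs_in r' i t' e \<longleftrightarrow> (\<exists>t. t' = f i t \<and> occurs_in r i t e)))"

lemma retiming_cut_run:
  assumes le_T: "\<And>i. c i \<le> T"
  shows "retiming r (cut_run T c r) (cut_global_time T c)"
  unfolding retiming_def
proof (intro allI conjI)
  fix i
  show "strict_mono (cut_global_time T c i)"
    by (rule strict_mono_cut_global_time)
  show "cut_run T c r (cut_global_time T c i t) i = r t i" for t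
    by (simp add: cut_run_def cut_local_time_global_time[where c = c and T = T, OF le_T])
  show "occurs_in (cut_run T c r) i t' e \<longleftrightarrow> (\<exists>t. t' = cut_global_time T c i t \<and> occurs_in r i t e)"
    for t' e
    by (rule occurs_in_cut_run[where c = c and T = T, OF le_T])
qed

lemma Least_strict_mono_image:
  fixes f :: "'a::wellorder \<Rightarrow> 'b::wellorder"
  assumes "strict_mono f" "Q v"
  shows "(LEAST u. \<exists>v. u = f v \<and> Q v) = f (LEAST v. Q v)"
proof (rule Least_equality)
  show "\<exists>v. f (LEAST v. Q v) = f v \<and> Q v"
    using LeastI[of Q, OF assms(2)] by blast
  show "f (LEAST v. Q v) \<le> u" if "\<exists>v. u = f v \<and> Q v" for u
    using that Least_le[of Q] strict_mono_less_eq[OF assms(1)] by blast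
qed

lemma op_end_of_completes:
  assumes "op_completes r (i, t)"
  shows "t < op_end r (i, t)" "responds_in r i (op_end r (i, t))"
proof -
  obtain u where "t < u \<and> responds_in r i u"
    using assms by (auto simp: op_completes_def)
  from LeastI[of "\<lambda>u. t < u \<and> responds_in r i u", OF this]
  show "t < op_end r (i, t)" "responds_in r i (op_end r (i, t))"
    by (simp_all add: op_end_def)
qed

lemma
  assumes ret: "retiming r r' f" and op: "is_op r (i, t)"
  shows retiming_is_op: "is_op r' (i, f i t)"
    and retiming_op_completes: "op_completes r' (i, f i t) \<longleftrightarrow> op_completes r (i, t)"
    and retiming_op_end: "op_completes r (i, t) \<Longrightarrow> op_end r' (i, f i t) = f i (op_end r (i, t))"
proof -
  have mono: "strict_mono (f i)"
    using ret by (simp add: retiming_def)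
  have occurs: "occurs_in r' i t' e \<longleftrightarrow> (\<exists>t. t' = f i t \<and> occurs_in r i t e)" for t' e
    using ret by (simp add: retiming_def)
  show "is_op r' (i, f i t)"
    using op occurs by (auto simp: is_op_def invoked_in_iff_occurs_in)
  have responds_after: "f i t < u \<and> responds_in r' i u
      \<longleftrightarrow> (\<exists>v. u = f i v \<and> t < v \<and> responds_in r i v)" for u
    using occurs strict_mono_less[OF mono] by (auto simp: responds_in_iff_occurs_in)
  then show "op_completes r' (i, f i t) \<longleftrightarrow> op_completes r (i, t)"
    using op \<open>is_op r' (i, f i t)\<close> by (auto simp: op_completes_def)
  show "op_end r' (i, f i t) = f i (op_end r (i, t))" if completes: "op_completes r (i, t)"
  proof -
    obtain v where "t < v \<and> responds_in r i v"
      using completes by (auto simp: op_completes_def)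
    then show ?thesis
      unfolding op_end_def fst_conv snd_conv responds_after
      by (rule Least_strict_mono_image[OF mono])
  qed
qed

lemma retiming_op_corresponds:
  assumes ret: "retiming r r' f" and op: "is_op r (i, t)"
  shows "op_corresponds r (i, t) r' (i, f i t)"
proof -
  have "r' (f i u) i = r u i" for u
    using ret by (simp add: retiming_def)
  then show ?thesis
    using op retiming_is_op[OF ret op] retiming_op_completes[OF ret op] retiming_op_end[OF ret op]
    by (simp add: op_corresponds_def op_start_def)
qed

lemma retiming_op_before_iff:
  assumes ret: "retiming r r' f" and "op_completes r (i, t)" "is_op r (j, s)"
  shows "op_before r' (i, f i t) (j, f j s) \<longleftrightarrow> f i (op_end r (i, t)) < f j s"
proof -
  have op: "is_op r (i, t)" using assms(2) by (simp add: op_completes_def)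
  show ?thesis
    using assms(2) retiming_op_completes[OF ret op] retiming_op_end[OF ret op assms(2)]
      retiming_is_op[OF ret assms(3)]
    by (simp add: op_before_def op_start_def)
qed

lemma responds_in_not_invoked_in: "responds_in r i t \<Longrightarrow> \<not> invoked_in r i t"
  by (auto simp: responds_in_def invoked_in_def)

lemma causal_cut_less_if_not_op_chain:
  assumes run: "is_run P r" and "is_op r (i, t)" "op_completes r (y, s)"
    and "\<not> op_chain r (i, t) (y, s)"
  shows "causal_cut r (y, op_end r (y, s)) i < t"
  using causal_cut_less_invocation[OF run] assms(2,4)
    responds_in_not_invoked_in[OF op_end_of_completes(2)[OF assms(3)]]
  by (simp add: is_op_def op_chain_def op_start_def)

lemma cut_run_op_before_if_inside_cut:
  assumes le_T: "\<And>i. c i \<le> T" and "op_completes r (i, t)" "op_end r (i, t) \<le> c i"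
    and "is_op r (j, s)" "c j < s"
  shows "op_before (cut_run T c r) (i, cut_global_time T c i t) (j, cut_global_time T c j s)"
proof -
  have ret: "retiming r (cut_run T c r) (cut_global_time T c)"
    by (rule retiming_cut_run[OF le_T])
  show ?thesis
    unfolding retiming_op_before_iff[OF ret assms(2,4)]
    using assms(3,5) le_T[of i] by (simp add: cut_global_time_def)
qed

lemma cut_run_op_before_if_after_cut:
  assumes le_T: "\<And>i. c i \<le> T" and "op_completes r (i, t)" "c i < t"
    and "is_op r (j, s)" "c j < s" "op_end r (i, t) < s"
  shows "op_before (cut_run T c r) (i, cut_global_time T c i t) (j, cut_global_time T c j s)"
proof -
  have ret: "retiming r (cut_run T c r) (cut_global_time T c)"
    by (rule retiming_cut_run[OF le_T])
  show ?thesis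
    unfolding retiming_op_before_iff[OF ret assms(2,4)]
    using assms(3,5,6) op_end_of_completes(1)[OF assms(2)] by (simp add: cut_global_time_def)
qed

theorem theorem9:
  fixes P :: "('v, 'p::finite, 'm, 'a, 'o, 'x) protocol"
    and r :: "('v, 'p, 'm, 'a, 'o, 'x) run"
    and X Y :: "'p op"
  assumes "is_run P r"
    and "is_op r X" and "is_op r Y"
    and "op_completes r Y"
    and "\<not> op_chain r X Y"
  shows "\<exists>r'. is_run P r' \<and> loc_equiv r' r \<and>
           (\<exists>X' Y'. op_corresponds r X r' X' \<and> op_corresponds r Y r' Y' \<and>
              op_before r' Y' X' \<and>
              (\<forall>Z. op_completes r Z \<and> op_before r X Z \<and> \<not> op_chain r Z Y \<longrightarrow>
                  (\<exists>Z'. op_corresponds r Z r' Z' \<and> op_before r' X' Z')))"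
proof -
  note run = assms(1)
  obtain x tx y ty where X: "X = (x, tx)" and Y: "Y = (y, ty)" by fastforce
  define T where "T = op_end r Y"
  define c where "c = causal_cut r (y, T)"
  define f where "f = cut_global_time T c"
  have le_T: "c i \<le> T" for i
    using causal_cut_le[OF run, of "(y, T)"] by (simp add: c_def)
  have outside: "c i < t" if "is_op r (i, t)" "\<not> op_chain r (i, t) Y" for i t
    using causal_cut_less_if_not_op_chain[OF run that(1)] assms(4) that(2) by (simp add: c_def T_def Y)
  have "op_end r Y \<le> c y"
    using causal_cut_self[OF run, of "(y, T)"] by (simp add: c_def T_def)
  then have Y_before_X: "op_before (cut_run T c r) (y, f y ty) (x, f x tx)"
    unfolding f_def
    by (intro cut_run_op_before_if_inside_cut[where c = c and T = T, OF le_T])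
      (use assms outside in \<open>simp_all add: X Y\<close>)
  have X_before_Z: "op_before (cut_run T c r) (x, f x tx) (z, f z tz)"
    if "op_completes r (z, tz)" "op_before r X (z, tz)" "\<not> op_chain r (z, tz) Y" for z tz
    unfolding f_def
    by (intro cut_run_op_before_if_after_cut[where c = c and T = T, OF le_T])
      (use assms(2,5) outside that in \<open>simp_all add: X op_before_def op_completes_def op_start_def\<close>)
  have corresponds: "op_corresponds r (i, t) (cut_run T c r) (i, f i t)" if "is_op r (i, t)" for i t
    unfolding f_def using retiming_op_corresponds[OF retiming_cut_run[where c = c and T = T, OF le_T] that] .
  show ?thesis
  proof (intro exI conjI)
    show "is_run P (cut_run T c r)"
      using cut_run_is_run[OF run _ le_T] consistent_cut_causal_cut[OF run] by (simp add: c_def)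
    show "loc_equiv (cut_run T c r) r"
      using le_T by (rule cut_run_loc_equiv)
    show "op_corresponds r X (cut_run T c r) (x, f x tx)" "op_corresponds r Y (cut_run T c r) (y, f y ty)"
      using corresponds assms(2,3) by (simp_all add: X Y)
    show "op_before (cut_run T c r) (y, f y ty) (x, f x tx)" by (rule Y_before_X)
    show "\<forall>Z. op_completes r Z \<and> op_before r X Z \<and> \<not> op_chain r Z Y \<longrightarrow>
      (\<exists>Z'. op_corresponds r Z (cut_run T c r) Z' \<and> op_before (cut_run T c r) (x, f x tx) Z')"
      using corresponds X_before_Z by (force simp: op_completes_def)
  qed
qed

end
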